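(* Let $A$ satisfy the spectral assumption, with $R_1,R_2,N_1,N_2$ as below, and let $\gamma>0$, $\varepsilon_2,\varepsilon_3>0$. If $x\in\mathbb{R}^n$ satisfies $\|R_1x\|/\|R_2x\|>\gamma$, then for every $\omega\in\mathbb{N}$ $$\frac{\|R_1A^\omega x\|}{\|R_2A^\omega x\|}>\gamma_\omega:=C_\gamma\left(\frac{|\lambda_k|}{(1+\varepsilon_3|\lambda_k|)(|\lambda_{k+1}|+\varepsilon_2)}\right)^{\omega},\qquad C_\gamma:=\frac{1}{(1+\frac1\gamma)\,\zeta_{\varepsilon_3}(N_1^{-1})\,\zeta_{\varepsilon_2}(N_2)\,\|R_2\|}.$$ Consequently, if $\varepsilon_2,\varepsilon_3$ are such that the base of the power exceeds $1$, then for every $\gamma_+>0$ there is $\omega_0=O(\log(\gamma_+/\gamma))$ such that the ratio exceeds $\gamma_+$ for all $\omega>\omega_0$.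
   Context: Spectral assumption: $A\in\mathbb{R}^{n\times n}$ diagonalizable with eigenvalues $|\lambda_1|>\cdots\ge|\lambda_k|>1>|\lambda_{k+1}|\ge\cdots\ge|\lambda_n|$. $Q_1,Q_2$ have orthonormal columns spanning the unstable subspace $E_{\mathrm u}$ (eigenvectors of $\lambda_1..\lambda_k$) and stable subspace $E_{\mathrm s}$ (eigenvectors of $\lambda_{k+1}..\lambda_n$), $Q=[Q_1\ Q_2]$, $Q^{-1}=\begin{bmatrix}R_1\\R_2\end{bmatrix}$, and $Q^{-1}AQ=\mathrm{diag}(N_1,N_2)$ ($N_1$ invertible, $\rho(N_1^{-1})=1/|\lambda_k|$, $\rho(N_2)=|\lambda_{k+1}|$). For square $X$ and $\varepsilon>0$, $\zeta_\varepsilon(X):=\sup_{t\ge0}\|X^t\|/(\rho(X)+\varepsilon)^t$. Norms are spectral/Euclidean. *)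

theory Defs
  imports "HOL-Analysis.Analysis" "HOL-Library.Landau_Symbols"
begin

definition matpow :: "real^'n^'n \<Rightarrow> nat \<Rightarrow> real^'n^'n" where
  "matpow X t = (((**) X) ^^ t) (mat 1)"

definition cmat :: "real^'n^'m \<Rightarrow> complex^'n^'m" where
  "cmat X = (\<chi> i j. complex_of_real (X $ i $ j))"

definition cvec :: "real^'n \<Rightarrow> complex^'n" where
  "cvec x = (\<chi> i. complex_of_real (x $ i))"

definition is_eigenvalue :: "real^'n^'n \<Rightarrow> complex \<Rightarrow> bool" where
  "is_eigenvalue X \<mu> \<longleftrightarrow> (\<exists>v::complex^'n. v \<noteq> 0 \<and> cmat X *v v = \<mu> *s v)"

definition spec_radius :: "real^'n^'n \<Rightarrow> real" where
  "spec_radius X = Max {cmod \<mu> | \<mu>. is_eigenvalue X \<mu>}"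

definition snorm :: "real^'n^'m \<Rightarrow> real" where
  "snorm X = onorm (\<lambda>v. X *v v)"

definition zeta :: "real \<Rightarrow> real^'n^'n \<Rightarrow> real" where
  "zeta \<epsilon> X = (SUP t::nat. snorm (matpow X t) / (spec_radius X + \<epsilon>) ^ t)"

end

theory Submission
  imports Defs "HOL-Real_Asymp.Real_Asymp"
begin

text \<open>
  Since \<open>Q\<^sup>-\<^sup>1 A Q = diag(N\<^sub>1, N\<^sub>2)\<close>, the two blocks evolve separately:
  \<open>R\<^sub>i A\<^sup>\<omega> x = N\<^sub>i\<^sup>\<omega> R\<^sub>i x\<close>. Hence
  \<open>\<parallel>R\<^sub>1 x\<parallel> \<le> \<zeta>\<^sub>3 (1/|\<lambda>\<^sub>k| + \<epsilon>\<^sub>3)\<^sup>\<omega> \<parallel>R\<^sub>1 A\<^sup>\<omega> x\<parallel>\<close> and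
  \<open>\<parallel>R\<^sub>2 A\<^sup>\<omega> x\<parallel> \<le> \<zeta>\<^sub>2 (|\<lambda>\<^sub>k\<^sub>+\<^sub>1| + \<epsilon>\<^sub>2)\<^sup>\<omega> \<parallel>R\<^sub>2 x\<parallel>\<close>,
  and combining both with \<open>\<parallel>R\<^sub>1 x\<parallel> > \<gamma> \<parallel>R\<^sub>2 x\<parallel>\<close> gives the ratio bound.
  The real work is to see that the \<open>\<zeta>\<close> are finite with the spectral radii
  \<open>1/|\<lambda>\<^sub>k|\<close> and \<open>|\<lambda>\<^sub>k\<^sub>+\<^sub>1|\<close>: \<open>N\<^sub>1\<close> and \<open>N\<^sub>2\<close> represent \<open>A\<close> on invariant subspaces
  spanned by eigenvectors, so expanding in the (complex) eigenbasis bounds their powers by a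
  constant times the corresponding power of the extreme eigenvalue modulus.
  When the base of the power exceeds 1, the threshold
  \<open>\<omega>\<^sub>0 = \<lceil>log\<^sub>\<beta> (\<gamma>\<^sub>+ / C\<^sub>\<gamma>)\<rceil>\<close> is logarithmic in \<open>\<gamma>\<^sub>+\<close>.
\<close>

section \<open>Complexification and matrix powers\<close>

lemma cmat_mult: "cmat (X ** Y) = cmat X ** cmat Y"
  by (simp add: cmat_def matrix_matrix_mult_def vec_eq_iff)

lemma cmat_add: "cmat (X + Y) = cmat X + cmat Y"
  by (simp add: cmat_def vec_eq_iff)

lemma cmat_mat: "cmat (mat 1) = mat 1"
  by (simp add: cmat_def mat_def vec_eq_iff)

lemma cmat_mult_cvec: "cmat X *v cvec y = cvec (X *v y)"
  by (simp add: cmat_def cvec_def matrix_vector_mult_def vec_eq_iff)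

lemma norm_cvec [simp]: "norm (cvec y) = norm y"
  by (simp add: cvec_def norm_vec_def)

lemma cvec_eq_0_iff [simp]: "cvec y = 0 \<longleftrightarrow> y = 0"
  by (simp add: cvec_def vec_eq_iff)

lemma norm_scalar_mult_vec: "norm (c *s (x :: 'a::real_normed_field^'n)) = norm c * norm x"
  by (simp add: norm_vec_def norm_mult L2_set_right_distrib)

lemma cmat_mult_in_span:
  assumes "\<And>y. cvec (X *v y) \<in> vec.span S"
  shows "cmat X *v w \<in> vec.span S"
proof -
  define re im where "re = (\<chi> j. Re (w $ j))" and "im = (\<chi> j. Im (w $ j))"
  have "w = cvec re + \<i> *s cvec im"
    by (simp add: vec_eq_iff cvec_def re_def im_def complex_eq_iff)
  then have "cmat X *v w = cvec (X *v re) + \<i> *s cvec (X *v im)"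
    by (simp add: matrix_vector_right_distrib vector_scalar_commute cmat_mult_cvec)
  then show ?thesis
    using assms by (simp add: vec.span_add vec.span_scale)
qed

lemma matpow_0 [simp]: "matpow X 0 = mat 1"
  by (simp add: matpow_def)

lemma matpow_Suc: "matpow X (Suc t) = X ** matpow X t"
  by (simp add: matpow_def)

lemma matpow_Suc_right: "matpow X (Suc t) = matpow X t ** X"
  by (induction t) (simp_all add: matpow_Suc matrix_mul_assoc)

lemma matpow_mult_vec: "matpow X t *v y = ((*v) X ^^ t) y"
  by (induction t) (simp_all add: matpow_Suc matrix_vector_mul_assoc[symmetric])

lemma cvec_matpow_mult: "cvec (matpow X t *v y) = ((*v) (cmat X) ^^ t) (cvec y)"
  by (induction t) (simp_all add: matpow_mult_vec flip: cmat_mult_cvec)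

lemma matpow_intertwine_right:
  assumes "A ** Q = Q ** N"
  shows "matpow A t ** Q = Q ** matpow N t"
proof (induction t)
  case (Suc t)
  have "matpow A (Suc t) ** Q = A ** (matpow A t ** Q)"
    by (simp add: matpow_Suc matrix_mul_assoc)
  also have "\<dots> = (A ** Q) ** matpow N t"
    by (simp add: Suc matrix_mul_assoc)
  finally show ?case
    by (simp add: assms matpow_Suc matrix_mul_assoc)
qed simp

lemma matpow_intertwine_left:
  assumes "R ** A = N ** R"
  shows "R ** matpow A t = matpow N t ** R"
proof (induction t)
  case (Suc t)
  have "R ** matpow A (Suc t) = (R ** matpow A t) ** A"
    by (simp add: matpow_Suc_right matrix_mul_assoc)
  also have "\<dots> = matpow N t ** (R ** A)"
    by (simp add: Suc matrix_mul_assoc)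
  finally show ?case
    by (simp add: assms matpow_Suc_right matrix_mul_assoc)
qed simp

lemma matpow_right_inverse:
  assumes "X ** Y = mat 1"
  shows "matpow X t ** matpow Y t = mat 1"
proof (induction t)
  case (Suc t)
  have "matpow X (Suc t) ** matpow Y (Suc t) = matpow X t ** ((X ** Y) ** matpow Y t)"
    by (simp only: matpow_Suc_right[of X] matpow_Suc[of Y] matrix_mul_assoc)
  with Suc assms show ?case
    by simp
qed simp

lemma matrix_add_rdistrib: "(A + B) ** C = A ** C + B ** C"
  by (vector matrix_matrix_mult_def sum.distrib[symmetric] distrib_right)

lemma block_intertwine_right:
  assumes "Q1 ** R1 + Q2 ** R2 = mat 1" and "R2 ** A ** Q1 = 0"
  shows "A ** Q1 = Q1 ** (R1 ** A ** Q1)"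
proof -
  have "A ** Q1 = (Q1 ** R1 + Q2 ** R2) ** A ** Q1"
    using assms(1) by simp
  also have "\<dots> = Q1 ** (R1 ** A ** Q1) + Q2 ** (R2 ** A ** Q1)"
    by (simp add: matrix_add_rdistrib matrix_mul_assoc)
  finally show ?thesis
    using assms(2) by simp
qed

lemma block_intertwine_left:
  assumes "Q1 ** R1 + Q2 ** R2 = mat 1" and "R1 ** A ** Q2 = 0"
  shows "R1 ** A = (R1 ** A ** Q1) ** R1"
proof -
  have "R1 ** A = R1 ** A ** (Q1 ** R1 + Q2 ** R2)"
    using assms(1) by simp
  also have "\<dots> = (R1 ** A ** Q1) ** R1 + (R1 ** A ** Q2) ** R2"
    by (simp add: matrix_add_ldistrib matrix_mul_assoc)
  finally show ?thesis
    using assms(2) by simp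
qed

section \<open>Spectral norm and the constant \<open>\<zeta>\<close>\<close>

lemma norm_orthonormal_mult:
  fixes Q :: "real^'k^'n"
  assumes "transpose Q ** Q = mat 1"
  shows "norm (Q *v y) = norm y"
proof -
  have "(Q *v y) \<bullet> (Q *v y) = ((transpose Q ** Q) *v y) \<bullet> y"
    by (simp add: dot_lmul_matrix[symmetric] transpose_matrix_vector flip: matrix_vector_mul_assoc)
  then show ?thesis
    using assms by (simp add: norm_eq_sqrt_inner)
qed

lemma norm_le_snorm: "norm (X *v y) \<le> snorm X * norm y"
  unfolding snorm_def by (rule onorm) simp

lemma snorm_le: "(\<And>y. norm (X *v y) \<le> b * norm y) \<Longrightarrow> snorm X \<le> b"
  unfolding snorm_def by (rule onorm_le)

lemma snorm_mat_1 [simp]: "snorm (mat 1 :: real^'n^'n) = 1"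
proof -
  have "(*v) (mat 1 :: real^'n^'n) = id"
    by (rule ext) simp
  then show ?thesis
    by (simp add: snorm_def onorm_id)
qed

lemma one_le_snorm_left_inverse:
  fixes Q :: "real^'k^'n"
  assumes "R ** Q = mat 1" and "transpose Q ** Q = mat 1"
  shows "1 \<le> snorm R"
proof -
  obtain j :: 'k where True by blast
  let ?e = "axis j (1::real)"
  have "norm ?e \<le> snorm R * norm (Q *v ?e)"
    using norm_le_snorm[of R "Q *v ?e"] assms(1) by (simp add: matrix_vector_mul_assoc)
  then show ?thesis
    using norm_orthonormal_mult[OF assms(2)] by simp
qed

lemma snorm_matpow_inverse_le:
  assumes "N ** M = mat 1" and "0 < c" and "\<And>y. c * norm y \<le> K * norm (matpow N t *v y)"
  shows "snorm (matpow M t) \<le> K / c"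
proof (rule snorm_le)
  fix y
  have "matpow N t *v (matpow M t *v y) = y"
    by (simp add: matrix_vector_mul_assoc matpow_right_inverse[OF assms(1)])
  then show "norm (matpow M t *v y) \<le> K / c * norm y"
    using assms(2) assms(3)[of "matpow M t *v y"] by (simp add: field_simps)
qed

text \<open>
  \<open>zeta\<close> is a supremum, so its defining bound only holds once the sequence is known to be
  bounded; the growth hypothesis provides this.
\<close>

lemma zeta_bounds:
  fixes X :: "real^'n^'n"
  assumes "0 \<le> spec_radius X" and "0 < e"
    and growth: "\<And>t. snorm (matpow X t) \<le> K * spec_radius X ^ t"
  shows "snorm (matpow X t) \<le> zeta e X * (spec_radius X + e) ^ t" and "1 \<le> zeta e X"
proof -
  let ?r = "spec_radius X + e"
  let ?f = "\<lambda>t. snorm (matpow X t) / ?r ^ t"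
  have r: "0 < ?r"
    using assms(1,2) by linarith
  have K: "0 \<le> K"
    using growth[of 0] by simp
  have "?f t \<le> K" for t
  proof -
    have "spec_radius X ^ t \<le> ?r ^ t"
      using assms(1,2) by (intro power_mono) auto
    then have "snorm (matpow X t) \<le> K * ?r ^ t"
      using growth[of t] mult_left_mono[OF _ K] by (meson order_trans)
    then show ?thesis
      using r by (simp add: pos_divide_le_eq)
  qed
  then have le_zeta: "?f t \<le> zeta e X" for t
    unfolding zeta_def by (intro cSUP_upper bdd_aboveI2) auto
  show "snorm (matpow X t) \<le> zeta e X * ?r ^ t"
    using le_zeta[of t] r by (simp add: pos_divide_le_eq)
  show "1 \<le> zeta e X"
    using le_zeta[of 0] by simp
qed

section \<open>Eigenvalues\<close>

lemma spec_radius_eqI: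
  assumes "finite L"
    and "\<And>\<mu>. is_eigenvalue X \<mu> \<Longrightarrow> \<mu> \<in> L \<and> cmod \<mu> \<le> r"
    and "is_eigenvalue X \<mu>\<^sub>0" and "cmod \<mu>\<^sub>0 = r"
  shows "spec_radius X = r"
proof -
  have "{cmod \<mu> | \<mu>. is_eigenvalue X \<mu>} \<subseteq> cmod ` L"
    using assms(2) by blast
  then have "finite {cmod \<mu> | \<mu>. is_eigenvalue X \<mu>}"
    using assms(1) finite_subset by blast
  moreover have "y \<le> r" if "y \<in> {cmod \<mu> | \<mu>. is_eigenvalue X \<mu>}" for y
    using that assms(2) by blast
  moreover have "r \<in> {cmod \<mu> | \<mu>. is_eigenvalue X \<mu>}"
    using assms(3,4) by blast
  ultimately show ?thesis
    unfolding spec_radius_def by (rule Max_eqI)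
qed

lemma is_eigenvalue_left_inverse:
  assumes "M ** N = mat 1" and "is_eigenvalue N \<mu>"
  shows "\<mu> \<noteq> 0 \<and> is_eigenvalue M (1 / \<mu>)"
proof -
  obtain w where w: "w \<noteq> 0" "cmat N *v w = \<mu> *s w"
    using assms(2) unfolding is_eigenvalue_def by blast
  have "w = cmat M *v (cmat N *v w)"
    by (simp add: matrix_vector_mul_assoc assms(1) cmat_mat flip: cmat_mult)
  also have "\<dots> = \<mu> *s (cmat M *v w)"
    by (simp add: w(2) vector_scalar_commute)
  finally have w_eq: "w = \<mu> *s (cmat M *v w)" .
  then have "\<mu> \<noteq> 0"
    using w(1) by auto
  moreover have "cmat M *v w = (1 / \<mu>) *s w"
    using \<open>\<mu> \<noteq> 0\<close> by (subst w_eq) (simp add: vector_smult_assoc)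
  ultimately show ?thesis
    using w(1) unfolding is_eigenvalue_def by blast
qed

lemma invertible_if_not_eigenvalue_0:
  assumes "\<not> is_eigenvalue X 0"
  shows "invertible X"
proof -
  have "y = 0" if "X *v y = 0" for y
  proof (rule ccontr)
    assume "y \<noteq> 0"
    moreover have "cmat X *v cvec y = 0 *s cvec y"
      using that by (simp add: cmat_mult_cvec)
    ultimately show False
      using assms unfolding is_eigenvalue_def by (metis cvec_eq_0_iff)
  qed
  then obtain Y where "Y ** X = mat 1"
    using matrix_left_invertible_ker by blast
  then show ?thesis
    using matrix_left_right_inverse invertible_def by blast
qed

lemma matrix_inv_mult:
  assumes "invertible X"
  shows "X ** matrix_inv X = mat 1" and "matrix_inv X ** X = mat 1"
  using someI_ex[OF assms[unfolded invertible_def]] unfolding matrix_inv_def by auto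

lemma is_eigenvalue_compression:
  assumes "R ** A ** Q = N" and "u \<noteq> 0" and "cmat A *v u = \<mu> *s u"
    and "cmat Q *v (cmat R *v u) = u"
  shows "is_eigenvalue N \<mu>"
proof -
  have "cmat N *v (cmat R *v u) = cmat R *v (cmat A *v (cmat Q *v (cmat R *v u)))"
    by (simp add: matrix_vector_mul_assoc cmat_mult matrix_mul_assoc flip: assms(1))
  also have "\<dots> = \<mu> *s (cmat R *v u)"
    by (simp add: assms(3,4) vector_scalar_commute)
  finally show ?thesis
    using assms(2,4) unfolding is_eigenvalue_def by (metis matrix_vector_mult_0_right)
qed

section \<open>Coordinates in an eigenbasis\<close>

locale complex_eigenbasis =
  fixes A :: "real^'n^'n" and lam :: "nat \<Rightarrow> complex" and v :: "nat \<Rightarrow> complex^'n"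
    and I :: "nat set"
  assumes finite_I: "finite I"
    and eigenpair: "i \<in> I \<Longrightarrow> cmat A *v v i = lam i *s v i"
    and inj_v: "inj_on v I"
    and independent: "vec.independent (v ` I)"
    and spanning: "vec.span (v ` I) = UNIV"
begin

definition coord :: "complex^'n \<Rightarrow> nat \<Rightarrow> complex" where
  "coord z i = vec.representation (v ` I) z (v i)"

lemma coord_expansion: "(\<Sum>i\<in>I. coord z i *s v i) = z"
proof -
  have "(\<Sum>b\<in>v ` I. vec.representation (v ` I) z b *s b) = z"
    by (rule vec.sum_representation_eq) (simp_all add: independent spanning finite_I)
  then show ?thesis
    by (simp add: coord_def sum.reindex[OF inj_v])
qed

lemma coord_sum:
  assumes "i \<in> I"
  shows "coord (\<Sum>j\<in>I. a j *s v j) i = a i"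
proof -
  have "coord (\<Sum>j\<in>I. a j *s v j) i = (\<Sum>j\<in>I. a j * (if v i = v j then 1 else 0))"
    unfolding coord_def
    by (simp add: vec.representation_sum vec.representation_scale vec.representation_basis
        independent spanning)
  also have "\<dots> = (\<Sum>j\<in>I. if j = i then a j else 0)"
    using assms inj_onD[OF inj_v] by (intro sum.cong) auto
  also have "\<dots> = a i"
    using assms finite_I by simp
  finally show ?thesis .
qed

lemma coord_add: "coord (z + w) i = coord z i + coord w i"
  by (simp add: coord_def vec.representation_add independent spanning)

lemma coord_scale: "coord (c *s z) i = c * coord z i"
  by (simp add: coord_def vec.representation_scale independent spanning)

lemma coord_mult_A:
  assumes "i \<in> I"
  shows "coord (cmat A *v z) i = lam i * coord z i"
proof -
  have "cmat A *v z = (\<Sum>j\<in>I. coord z j *s (cmat A *v v j))"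
    by (subst (1) coord_expansion[of z, symmetric])
      (simp add: linear_sum vector_scalar_commute)
  also have "\<dots> = (\<Sum>j\<in>I. (lam j * coord z j) *s v j)"
    by (intro sum.cong) (simp_all add: eigenpair vector_smult_assoc mult.commute)
  finally show ?thesis
    using assms by (simp add: coord_sum)
qed

lemma coord_iter:
  assumes "i \<in> I"
  shows "coord (((*v) (cmat A) ^^ t) z) i = lam i ^ t * coord z i"
  by (induction t) (simp_all add: coord_mult_A assms)

lemma coord_eq_0_outside:
  assumes "J \<subseteq> I" and "z \<in> vec.span (v ` J)" and "i \<in> I - J"
  shows "coord z i = 0"
proof -
  have "coord z i = vec.representation (v ` J) z (v i)"
    unfolding coord_def using assms(1,2) independent by (simp add: vec.representation_extend image_mono)
  moreover have "v i \<notin> v ` J"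
    using assms inj_onD[OF inj_v] by blast
  ultimately show ?thesis
    using vec.representation_ne_zero by metis
qed

lemma span_inter_eq_0:
  assumes "J \<subseteq> I" and "J' \<subseteq> I" and "J \<inter> J' = {}"
    and "z \<in> vec.span (v ` J)" and "z \<in> vec.span (v ` J')"
  shows "z = 0"
proof -
  have "z = (\<Sum>i\<in>I. coord z i *s v i)"
    by (rule coord_expansion[symmetric])
  also have "\<dots> = 0"
  proof (rule sum.neutral, rule ballI)
    fix i
    assume "i \<in> I"
    then have "coord z i = 0"
      using assms coord_eq_0_outside by blast
    then show "coord z i *s v i = 0"
      by simp
  qed
  finally show ?thesis .
qed

lemma v_nonzero:
  assumes "i \<in> I"
  shows "v i \<noteq> 0"
proof
  assume "v i = 0"
  then have "0 \<in> v ` I"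
    using assms by (metis image_eqI)
  then show False
    using independent vec.dependent_zero by blast
qed

lemma eigenvalue_eq_lam:
  assumes "z \<noteq> 0" and "cmat A *v z = \<mu> *s z"
  obtains i where "i \<in> I" and "coord z i \<noteq> 0" and "\<mu> = lam i"
proof -
  obtain i where i: "i \<in> I" "coord z i \<noteq> 0"
    using assms(1) coord_expansion[of z] by (metis (no_types, lifting) sum.neutral vector_smult_lzero)
  have "lam i * coord z i = \<mu> * coord z i"
    using coord_mult_A[OF i(1), of z] assms(2) coord_scale by metis
  then have "\<mu> = lam i"
    using i(2) by simp
  with i that show ?thesis
    by blast
qed

lemma block_projection_id:
  assumes "Q1 ** R1 + Q2 ** R2 = mat 1"
    and "J1 \<subseteq> I" and "J2 \<subseteq> I" and "J1 \<inter> J2 = {}"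
    and "\<And>y. cvec (Q1 *v y) \<in> vec.span (v ` J1)" and "\<And>y. cvec (Q2 *v y) \<in> vec.span (v ` J2)"
    and "u \<in> vec.span (v ` J1)"
  shows "cmat Q1 *v (cmat R1 *v u) = u"
proof -
  define u2 where "u2 = cmat Q2 *v (cmat R2 *v u)"
  have "u = cmat (Q1 ** R1 + Q2 ** R2) *v u"
    using assms(1) by (simp add: cmat_mat)
  then have u: "u = cmat Q1 *v (cmat R1 *v u) + u2"
    by (simp add: u2_def cmat_add cmat_mult matrix_vector_mult_add_rdistrib matrix_vector_mul_assoc)
  have "u2 \<in> vec.span (v ` J2)"
    unfolding u2_def using assms(6) by (rule cmat_mult_in_span)
  moreover have "u2 \<in> vec.span (v ` J1)"
  proof -
    have "u2 = u - cmat Q1 *v (cmat R1 *v u)"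
      using u by (simp add: algebra_simps)
    then show ?thesis
      using vec.span_diff[OF assms(7) cmat_mult_in_span[OF assms(5)]] by simp
  qed
  ultimately have "u2 = 0"
    using span_inter_eq_0 assms(2-4) by blast
  with u show ?thesis
    by simp
qed

text \<open>Plays the role of the condition number of the matrix of eigenvectors.\<close>

definition expansion_bound :: real where
  "expansion_bound = (\<Sum>i\<in>I. onorm (\<lambda>z. coord z i) * norm (v i))"

lemma bounded_linear_coord: "bounded_linear (\<lambda>z. coord z i)"
proof -
  have "coord (r *\<^sub>R z) i = r *\<^sub>R coord z i" for r z
  proof -
    have "r *\<^sub>R z = complex_of_real r *s z"
      unfolding vec_eq_iff vector_scaleR_component vector_smult_component
      by (simp add: scaleR_conv_of_real)
    then show ?thesis
      by (simp only: coord_scale scaleR_conv_of_real)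
  qed
  then have "linear (\<lambda>z. coord z i)"
    by (intro linearI) (simp_all only: coord_add)
  then show ?thesis
    by (simp add: linear_conv_bounded_linear)
qed

lemma norm_le_sum_coord: "norm z \<le> (\<Sum>i\<in>I. cmod (coord z i) * norm (v i))"
proof -
  have "norm z \<le> (\<Sum>i\<in>I. norm (coord z i *s v i))"
    by (subst (1) coord_expansion[of z, symmetric]) (rule norm_sum)
  then show ?thesis
    by (simp add: norm_scalar_mult_vec)
qed

lemma sum_coord_le_expansion_bound:
  "(\<Sum>i\<in>I. cmod (coord z i) * norm (v i)) \<le> expansion_bound * norm z"
  unfolding expansion_bound_def sum_distrib_right
proof (rule sum_mono)
  fix i
  show "cmod (coord z i) * norm (v i) \<le> onorm (\<lambda>z. coord z i) * norm (v i) * norm z"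
    using mult_right_mono[OF onorm[OF bounded_linear_coord, of z i], of "norm (v i)"]
    by (simp add: mult_ac)
qed

lemma norm_iter_le:
  assumes "J \<subseteq> I" and "z \<in> vec.span (v ` J)" and "\<forall>j\<in>J. cmod (lam j) \<le> b" and "0 \<le> b"
  shows "norm (((*v) (cmat A) ^^ t) z) \<le> expansion_bound * b ^ t * norm z"
proof -
  let ?z' = "((*v) (cmat A) ^^ t) z"
  have "cmod (coord ?z' i) * norm (v i) \<le> b ^ t * (cmod (coord z i) * norm (v i))" if "i \<in> I" for i
  proof (cases "i \<in> J")
    case True
    then have "cmod (lam i) ^ t \<le> b ^ t"
      using assms(3) by (intro power_mono) auto
    from mult_right_mono[OF this, of "cmod (coord z i) * norm (v i)"] show ?thesis
      using that by (simp add: coord_iter norm_mult norm_power mult_ac)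
  next
    case False
    then show ?thesis
      using that assms(1,2) coord_eq_0_outside by (simp add: coord_iter)
  qed
  then have "(\<Sum>i\<in>I. cmod (coord ?z' i) * norm (v i)) \<le> b ^ t * (\<Sum>i\<in>I. cmod (coord z i) * norm (v i))"
    by (simp add: sum_distrib_left sum_mono)
  with norm_le_sum_coord[of ?z'] have "norm ?z' \<le> b ^ t * (\<Sum>i\<in>I. cmod (coord z i) * norm (v i))"
    by linarith
  also have "\<dots> \<le> b ^ t * (expansion_bound * norm z)"
    using assms(4) by (intro mult_left_mono sum_coord_le_expansion_bound) simp
  finally show ?thesis
    by (simp add: mult_ac)
qed


lemma norm_iter_ge:
  assumes "J \<subseteq> I" and "z \<in> vec.span (v ` J)" and "\<forall>j\<in>J. a \<le> cmod (lam j)" and "0 < a"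
  shows "a ^ t * norm z \<le> expansion_bound * norm (((*v) (cmat A) ^^ t) z)"
proof -
  let ?z' = "((*v) (cmat A) ^^ t) z"
  have "a ^ t * (cmod (coord z i) * norm (v i)) \<le> cmod (coord ?z' i) * norm (v i)" if "i \<in> I" for i
  proof (cases "i \<in> J")
    case True
    then have "a ^ t \<le> cmod (lam i) ^ t"
      using assms(3,4) by (intro power_mono) auto
    from mult_right_mono[OF this, of "cmod (coord z i) * norm (v i)"] show ?thesis
      using that by (simp add: coord_iter norm_mult norm_power mult_ac)
  next
    case False
    then show ?thesis
      using that assms(1,2) coord_eq_0_outside by (simp add: coord_iter)
  qed
  then have "a ^ t * (\<Sum>i\<in>I. cmod (coord z i) * norm (v i)) \<le> (\<Sum>i\<in>I. cmod (coord ?z' i) * norm (v i))"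
    by (simp add: sum_distrib_left sum_mono)
  moreover have "a ^ t * norm z \<le> a ^ t * (\<Sum>i\<in>I. cmod (coord z i) * norm (v i))"
    using assms(4) by (intro mult_left_mono norm_le_sum_coord) simp
  ultimately show ?thesis
    using sum_coord_le_expansion_bound[of ?z'] by linarith
qed

end

section \<open>Blocks on invariant subspaces\<close>

locale invariant_block = complex_eigenbasis A lam v I
  for A :: "real^'n^'n" and lam v I +
  fixes Q :: "real^'m^'n" and N :: "real^'m^'m" and J :: "nat set"
  assumes J_subset: "J \<subseteq> I"
    and orthonormal: "transpose Q ** Q = mat 1"
    and intertwine: "A ** Q = Q ** N"
    and range_in_span: "cvec (Q *v y) \<in> vec.span (v ` J)"
begin

lemma eigenvalue_block:
  assumes "is_eigenvalue N \<mu>"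
  obtains j where "j \<in> J" and "\<mu> = lam j"
proof -
  obtain w where w: "w \<noteq> 0" "cmat N *v w = \<mu> *s w"
    using assms unfolding is_eigenvalue_def by blast
  define z where "z = cmat Q *v w"
  have "cmat (transpose Q) *v z = w"
    by (simp add: z_def matrix_vector_mul_assoc orthonormal cmat_mat flip: cmat_mult)
  then have "z \<noteq> 0"
    using w(1) by auto
  moreover have "cmat A *v z = \<mu> *s z"
  proof -
    have "cmat A *v z = cmat Q *v (cmat N *v w)"
      by (simp add: z_def matrix_vector_mul_assoc intertwine flip: cmat_mult)
    then show ?thesis
      by (simp add: z_def w(2) vector_scalar_commute)
  qed
  ultimately obtain i where i: "i \<in> I" "coord z i \<noteq> 0" "\<mu> = lam i"
    by (rule eigenvalue_eq_lam)
  have "z \<in> vec.span (v ` J)"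
    unfolding z_def using range_in_span by (rule cmat_mult_in_span)
  then have "i \<in> J"
    using i J_subset coord_eq_0_outside by blast
  with i that show ?thesis
    by blast
qed

lemma norm_matpow_block:
  "norm (matpow N t *v y) = norm (((*v) (cmat A) ^^ t) (cvec (Q *v y)))"
proof -
  have "norm (matpow N t *v y) = norm (Q *v (matpow N t *v y))"
    by (simp add: norm_orthonormal_mult[OF orthonormal])
  also have "\<dots> = norm (matpow A t *v (Q *v y))"
    by (simp add: matrix_vector_mul_assoc matpow_intertwine_right[OF intertwine])
  finally show ?thesis
    by (simp flip: cvec_matpow_mult)
qed

lemma norm_matpow_block_le:
  assumes "\<forall>j\<in>J. cmod (lam j) \<le> b" and "0 \<le> b"
  shows "norm (matpow N t *v y) \<le> expansion_bound * b ^ t * norm y"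
  using norm_iter_le[OF J_subset range_in_span assms, of t]
  by (simp add: norm_matpow_block norm_orthonormal_mult[OF orthonormal])

lemma norm_matpow_block_ge:
  assumes "\<forall>j\<in>J. a \<le> cmod (lam j)" and "0 < a"
  shows "a ^ t * norm y \<le> expansion_bound * norm (matpow N t *v y)"
  using norm_iter_ge[OF J_subset range_in_span assms, of t]
  by (simp add: norm_matpow_block norm_orthonormal_mult[OF orthonormal])

end

section \<open>Growth of the ratio\<close>

text \<open>
  The factors \<open>1 + 1/\<gamma>\<close> and \<open>s \<ge> 1\<close> only weaken the bound; they are there to match the
  constant \<open>C\<^sub>\<gamma>\<close> of the paper, where \<open>s = \<parallel>R\<^sub>2\<parallel>\<close>.
\<close>

lemma block_ratio_lower_bound:
  fixes N1 M :: "real^'k^'k" and N2 :: "real^'s^'s"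
  assumes "M ** N1 = mat 1"
    and M_le: "snorm (matpow M t) \<le> z3 * r3 ^ t" and N2_le: "snorm (matpow N2 t) \<le> z2 * r2 ^ t"
    and "0 < z3" "0 < z2" "0 < r3" "0 < r2" "1 \<le> s" "0 < \<gamma>"
    and pq: "\<gamma> * norm q < norm p"
  shows "1 / ((1 + 1/\<gamma>) * z3 * z2 * s) * (1 / (r3 * r2)) ^ t * norm (matpow N2 t *v q)
    < norm (matpow N1 t *v p)"
proof -
  define c where "c = (1 + 1/\<gamma>) * s"
  define D where "D = z3 * r3 ^ t"
  have c: "0 < c" and "\<gamma> * c = (\<gamma> + 1) * s"
    using assms(8,9) by (simp_all add: c_def add_pos_pos field_simps)
  have D: "0 < D"
    using assms(4,6) by (simp add: D_def)
  have "norm p = norm (matpow M t *v (matpow N1 t *v p))"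
    by (simp add: matrix_vector_mul_assoc matpow_right_inverse[OF assms(1)])
  also have "\<dots> \<le> D * norm (matpow N1 t *v p)"
    unfolding D_def using M_le norm_le_snorm order_trans mult_right_mono norm_ge_zero by metis
  finally have p: "norm p / D \<le> norm (matpow N1 t *v p)"
    using D by (simp add: divide_le_eq mult.commute)
  have q: "norm (matpow N2 t *v q) \<le> z2 * r2 ^ t * norm q"
    using N2_le norm_le_snorm order_trans mult_right_mono norm_ge_zero by metis
  have "1 / (c * z3 * z2) * (1 / (r3 * r2)) ^ t * norm (matpow N2 t *v q)
      \<le> 1 / (c * z3 * z2) * (1 / (r3 * r2)) ^ t * (z2 * r2 ^ t * norm q)"
    using c assms(4-7) by (intro mult_left_mono[OF q]) simp
  also have "\<dots> = norm q / c / D"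
    using c assms(4-7) by (simp add: D_def field_simps power_mult_distrib)
  also have "\<dots> \<le> \<gamma> * norm q / D"
  proof (rule divide_right_mono)
    have "1 \<le> (\<gamma> + 1) * s"
      using assms(8,9) mult_mono[of 1 "\<gamma> + 1" 1 s] by simp
    then have "norm q \<le> (\<gamma> + 1) * s * norm q"
      using mult_right_mono[of 1 "(\<gamma> + 1) * s" "norm q"] by simp
    also have "\<dots> = \<gamma> * norm q * c"
      using \<open>\<gamma> * c = (\<gamma> + 1) * s\<close> by (simp add: mult_ac)
    finally show "norm q / c \<le> \<gamma> * norm q"
      using c by (simp add: divide_le_eq)
  qed (use D in simp)
  also have "\<dots> < norm p / D"
    using pq D by (simp add: divide_strict_right_mono)
  finally show ?thesis
    using p unfolding c_def by (simp add: mult_ac)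
qed

lemma exceeds_power_growth_eventually:
  fixes f g :: "nat \<Rightarrow> real"
  assumes "0 < C" and "1 < \<beta>" and "0 < \<gamma>"
    and growth: "\<And>\<omega>. C * \<beta> ^ \<omega> * g \<omega> < f \<omega>" and g: "\<And>\<omega>. 0 \<le> g \<omega>"
  shows "\<exists>\<omega>0 :: real \<Rightarrow> nat. (\<lambda>x. real (\<omega>0 x)) \<in> O(\<lambda>x. ln (x / \<gamma>)) \<and>
    (\<forall>\<gamma>p>0. \<forall>\<omega>. \<omega> > \<omega>0 \<gamma>p \<longrightarrow> \<gamma>p * g \<omega> < f \<omega>)"
proof -
  define \<omega>0 where "\<omega>0 x = nat \<lceil>ln (x / C) / ln \<beta>\<rceil>" for x
  have "(\<lambda>x. real (\<omega>0 x)) \<in> O(\<lambda>x. \<bar>ln (x / C) / ln \<beta>\<bar> + 1)"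
  proof (intro bigoI[where c = 1] always_eventually allI)
    fix x
    have "real (\<omega>0 x) \<le> \<bar>ln (x / C) / ln \<beta>\<bar> + 1"
      unfolding \<omega>0_def by linarith
    then show "norm (real (\<omega>0 x)) \<le> 1 * norm (\<bar>ln (x / C) / ln \<beta>\<bar> + 1)"
      by simp
  qed
  also have "(\<lambda>x. \<bar>ln (x / C) / ln \<beta>\<bar> + 1) \<in> O(\<lambda>x. ln (x / \<gamma>))"
    using assms(1-3) by real_asymp
  finally have bigo: "(\<lambda>x. real (\<omega>0 x)) \<in> O(\<lambda>x. ln (x / \<gamma>))" .
  have "\<gamma>p * g \<omega> < f \<omega>" if "0 < \<gamma>p" and "\<omega>0 \<gamma>p < \<omega>" for \<gamma>p \<omega>
  proof -
    have "ln (\<gamma>p / C) / ln \<beta> \<le> real \<omega>"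
      using that(2) unfolding \<omega>0_def by linarith
    then have "ln (\<gamma>p / C) \<le> ln (\<beta> ^ \<omega>)"
      using assms(2) by (simp add: divide_le_eq ln_realpow)
    then have "\<gamma>p \<le> C * \<beta> ^ \<omega>"
      using that(1) assms(1,2) by (simp add: divide_le_eq mult.commute)
    then show ?thesis
      using growth[of \<omega>] mult_right_mono[OF _ g] by (meson le_less_trans)
  qed
  with bigo show ?thesis
    by blast
qed

section \<open>The spectral splitting\<close>

lemma lift_Suc_antimono_le_interval:
  fixes f :: "nat \<Rightarrow> 'a::preorder"
  assumes "\<And>i. m \<le> i \<Longrightarrow> i < n \<Longrightarrow> f (Suc i) \<le> f i" and "m \<le> i" and "i \<le> j" and "j \<le> n"
  shows "f j \<le> f i"
  using assms(3)
proof (induction j rule: dec_induct)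
  case (step l)
  then have "f (Suc l) \<le> f l"
    using assms(1,2,4) by simp
  then show ?case
    using step.IH by (rule order_trans)
qed simp

locale spectral_splitting =
  fixes A :: "real^'n^'n"
    and Q1 :: "real^'k^'n" and Q2 :: "real^'s^'n"
    and R1 :: "real^'n^'k" and R2 :: "real^'n^'s"
    and N1 :: "real^'k^'k" and N2 :: "real^'s^'s"
    and lam :: "nat \<Rightarrow> complex" and v :: "nat \<Rightarrow> complex^'n"
    and n k :: nat
  assumes n_def: "n = CARD('n)" and k_def: "k = CARD('k)"
    and dims: "CARD('k) + CARD('s) = CARD('n)"
    and eig: "\<And>i. i \<in> {1..n} \<Longrightarrow> cmat A *v v i = lam i *s v i"
    and inj: "inj_on v {1..n}"
    and indep: "vec.independent (v ` {1..n})"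
    and spans: "vec.span (v ` {1..n}) = UNIV"
    and ord_u: "\<And>i. 1 \<le> i \<Longrightarrow> i < k \<Longrightarrow> cmod (lam i) \<ge> cmod (lam (Suc i))"
    and gt1: "cmod (lam k) > 1"
    and ord_s: "\<And>i. Suc k \<le> i \<Longrightarrow> i < n \<Longrightarrow> cmod (lam i) \<ge> cmod (lam (Suc i))"
    and Q1_orth: "transpose Q1 ** Q1 = mat 1"
    and Q2_orth: "transpose Q2 ** Q2 = mat 1"
    and Q1_span: "range (\<lambda>y. Q1 *v y) = {z. cvec z \<in> vec.span (v ` {1..k})}"
    and Q2_span: "range (\<lambda>y. Q2 *v y) = {z. cvec z \<in> vec.span (v ` {Suc k..n})}"
    and R22: "R2 ** Q2 = mat 1"
    and QR: "Q1 ** R1 + Q2 ** R2 = mat 1"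
    and N1_def: "R1 ** A ** Q1 = N1" and N2_def: "R2 ** A ** Q2 = N2"
    and off12: "R1 ** A ** Q2 = 0" and off21: "R2 ** A ** Q1 = 0"
begin

lemma one_le_k: "1 \<le> k"
  using k_def by (simp add: Suc_leI)

lemma Suc_k_le_n: "Suc k \<le> n"
proof -
  have "0 < CARD('s)"
    by simp
  then show ?thesis
    using dims n_def k_def by linarith
qed

lemma Q2R2_plus_Q1R1: "Q2 ** R2 + Q1 ** R1 = mat 1"
  using QR by (simp add: add.commute)

lemma A_Q1: "A ** Q1 = Q1 ** N1"
  using block_intertwine_right[OF QR off21] N1_def by simp

lemma A_Q2: "A ** Q2 = Q2 ** N2"
  using block_intertwine_right[OF Q2R2_plus_Q1R1 off12] N2_def by simp

lemma R1_A: "R1 ** A = N1 ** R1"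
  using block_intertwine_left[OF QR off12] N1_def by simp

lemma R2_A: "R2 ** A = N2 ** R2"
  using block_intertwine_left[OF Q2R2_plus_Q1R1 off21] N2_def by simp

lemma Q1_range: "cvec (Q1 *v y) \<in> vec.span (v ` {1..k})"
  using Q1_span by blast

lemma Q2_range: "cvec (Q2 *v y) \<in> vec.span (v ` {Suc k..n})"
  using Q2_span by blast

sublocale eigenbasis: complex_eigenbasis A lam v "{1..n}"
  using eig inj indep spans by unfold_locales auto

sublocale unstable: invariant_block A lam v "{1..n}" Q1 N1 "{1..k}"
  using Q1_orth A_Q1 Q1_range Suc_k_le_n by unfold_locales auto

sublocale stable: invariant_block A lam v "{1..n}" Q2 N2 "{Suc k..n}"
  using Q2_orth A_Q2 Q2_range by unfold_locales auto

lemma unstable_modulus_ge: "j \<in> {1..k} \<Longrightarrow> cmod (lam k) \<le> cmod (lam j)"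
  using lift_Suc_antimono_le_interval[of 1 k "\<lambda>i. cmod (lam i)" j k] ord_u by simp

lemma stable_modulus_le: "j \<in> {Suc k..n} \<Longrightarrow> cmod (lam j) \<le> cmod (lam (Suc k))"
  using lift_Suc_antimono_le_interval[of "Suc k" n "\<lambda>i. cmod (lam i)" "Suc k" j] ord_s by simp

lemma is_eigenvalue_N1: "is_eigenvalue N1 (lam k)"
proof (rule is_eigenvalue_compression[OF N1_def])
  have "k \<in> {1..n}" and "k \<in> {1..k}"
    using one_le_k Suc_k_le_n by auto
  then show "v k \<noteq> 0" and "cmat A *v v k = lam k *s v k"
    by (simp_all add: eigenbasis.v_nonzero eig)
  show "cmat Q1 *v (cmat R1 *v v k) = v k"
    using Suc_k_le_n \<open>k \<in> {1..k}\<close>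
    by (intro eigenbasis.block_projection_id[OF QR _ _ _ Q1_range Q2_range] vec.span_base) auto
qed

lemma is_eigenvalue_N2: "is_eigenvalue N2 (lam (Suc k))"
proof (rule is_eigenvalue_compression[OF N2_def])
  have "Suc k \<in> {1..n}" and "Suc k \<in> {Suc k..n}"
    using Suc_k_le_n by auto
  then show "v (Suc k) \<noteq> 0" and "cmat A *v v (Suc k) = lam (Suc k) *s v (Suc k)"
    by (simp_all add: eigenbasis.v_nonzero eig)
  show "cmat Q2 *v (cmat R2 *v v (Suc k)) = v (Suc k)"
    using Suc_k_le_n \<open>Suc k \<in> {Suc k..n}\<close>
    by (intro eigenbasis.block_projection_id[OF Q2R2_plus_Q1R1 _ _ _ Q2_range Q1_range] vec.span_base) auto
qed

lemma invertible_N1: "invertible N1"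
proof (rule invertible_if_not_eigenvalue_0)
  show "\<not> is_eigenvalue N1 0"
  proof
    assume "is_eigenvalue N1 0"
    then obtain j where "j \<in> {1..k}" and "0 = lam j"
      by (rule unstable.eigenvalue_block)
    then show False
      using unstable_modulus_ge gt1 by fastforce
  qed
qed

lemma spec_radius_inverse_N1: "spec_radius (matrix_inv N1) = 1 / cmod (lam k)"
proof (rule spec_radius_eqI)
  show "finite ((\<lambda>j. 1 / lam j) ` {1..k})"
    by simp
  show "is_eigenvalue (matrix_inv N1) (1 / lam k)"
    using is_eigenvalue_left_inverse[OF matrix_inv_mult(2)[OF invertible_N1] is_eigenvalue_N1] by blast
  show "cmod (1 / lam k) = 1 / cmod (lam k)"
    by (simp add: norm_divide)
next
  fix \<mu>
  assume "is_eigenvalue (matrix_inv N1) \<mu>"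
  then have "is_eigenvalue N1 (1 / \<mu>)"
    using is_eigenvalue_left_inverse[OF matrix_inv_mult(1)[OF invertible_N1]] by blast
  then obtain j where j: "j \<in> {1..k}" and "1 / \<mu> = lam j"
    by (rule unstable.eigenvalue_block)
  then have "\<mu> = 1 / lam j"
    by (simp flip: \<open>1 / \<mu> = lam j\<close>)
  moreover have "1 / cmod (lam j) \<le> 1 / cmod (lam k)"
  proof -
    have "cmod (lam k) \<le> cmod (lam j)" and "0 < cmod (lam k)"
      using unstable_modulus_ge[OF j] gt1 by auto
    then show ?thesis
      by (simp add: frac_le)
  qed
  ultimately show "\<mu> \<in> (\<lambda>j. 1 / lam j) ` {1..k} \<and> cmod \<mu> \<le> 1 / cmod (lam k)"
    using j by (simp add: norm_divide)
qed

lemma spec_radius_N2: "spec_radius N2 = cmod (lam (Suc k))"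
proof (rule spec_radius_eqI[OF _ _ is_eigenvalue_N2 refl])
  show "finite (lam ` {Suc k..n})"
    by simp
  fix \<mu>
  assume "is_eigenvalue N2 \<mu>"
  then obtain j where "j \<in> {Suc k..n}" and "\<mu> = lam j"
    by (rule stable.eigenvalue_block)
  then show "\<mu> \<in> lam ` {Suc k..n} \<and> cmod \<mu> \<le> cmod (lam (Suc k))"
    using stable_modulus_le by blast
qed

lemma zeta_bounds_inverse_N1:
  assumes "0 < \<epsilon>"
  shows "snorm (matpow (matrix_inv N1) t) \<le> zeta \<epsilon> (matrix_inv N1) * (1 / cmod (lam k) + \<epsilon>) ^ t"
    and "1 \<le> zeta \<epsilon> (matrix_inv N1)"
proof -
  let ?a = "cmod (lam k)"
  have "\<forall>j\<in>{1..k}. ?a \<le> cmod (lam j)" and "0 < ?a"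
    using unstable_modulus_ge gt1 by auto
  then have "snorm (matpow (matrix_inv N1) t) \<le> eigenbasis.expansion_bound / ?a ^ t" for t
    by (intro snorm_matpow_inverse_le[OF matrix_inv_mult(1)[OF invertible_N1]]
        unstable.norm_matpow_block_ge zero_less_power)
  then have "snorm (matpow (matrix_inv N1) t) \<le> eigenbasis.expansion_bound * spec_radius (matrix_inv N1) ^ t" for t
    by (simp add: spec_radius_inverse_N1 power_one_over)
  note zeta = zeta_bounds[OF _ assms this]
  show "snorm (matpow (matrix_inv N1) t) \<le> zeta \<epsilon> (matrix_inv N1) * (1 / ?a + \<epsilon>) ^ t"
    and "1 \<le> zeta \<epsilon> (matrix_inv N1)"
    using zeta by (simp_all add: spec_radius_inverse_N1)
qed

lemma zeta_bounds_N2: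
  assumes "0 < \<epsilon>"
  shows "snorm (matpow N2 t) \<le> zeta \<epsilon> N2 * (cmod (lam (Suc k)) + \<epsilon>) ^ t"
    and "1 \<le> zeta \<epsilon> N2"
proof -
  have "\<forall>j\<in>{Suc k..n}. cmod (lam j) \<le> cmod (lam (Suc k))"
    using stable_modulus_le by blast
  then have "snorm (matpow N2 t) \<le> eigenbasis.expansion_bound * spec_radius N2 ^ t" for t
    unfolding spec_radius_N2 by (intro snorm_le stable.norm_matpow_block_le norm_ge_zero)
  note zeta = zeta_bounds[OF _ assms this]
  show "snorm (matpow N2 t) \<le> zeta \<epsilon> N2 * (cmod (lam (Suc k)) + \<epsilon>) ^ t"
    and "1 \<le> zeta \<epsilon> N2"
    using zeta by (simp_all add: spec_radius_N2)
qed

definition gain :: "real \<Rightarrow> real \<Rightarrow> real \<Rightarrow> real" where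
  "gain \<gamma> \<epsilon>2 \<epsilon>3 = 1 / ((1 + 1/\<gamma>) * zeta \<epsilon>3 (matrix_inv N1) * zeta \<epsilon>2 N2 * snorm R2)"

definition growth_rate :: "real \<Rightarrow> real \<Rightarrow> real" where
  "growth_rate \<epsilon>2 \<epsilon>3 =
    cmod (lam k) / ((1 + \<epsilon>3 * cmod (lam k)) * (cmod (lam (Suc k)) + \<epsilon>2))"

lemma gain_pos:
  assumes "0 < \<gamma>" and "0 < \<epsilon>2" and "0 < \<epsilon>3"
  shows "0 < gain \<gamma> \<epsilon>2 \<epsilon>3"
  using assms zeta_bounds_inverse_N1(2)[of \<epsilon>3] zeta_bounds_N2(2)[of \<epsilon>2]
    one_le_snorm_left_inverse[OF R22 Q2_orth]
  unfolding gain_def by (simp add: add_pos_pos)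

lemma ratio_lower_bound:
  assumes "0 < \<gamma>" and "0 < \<epsilon>2" and "0 < \<epsilon>3"
    and "\<gamma> * norm (R2 *v x) < norm (R1 *v x)"
  shows "gain \<gamma> \<epsilon>2 \<epsilon>3 * growth_rate \<epsilon>2 \<epsilon>3 ^ \<omega> * norm (R2 *v (matpow A \<omega> *v x))
    < norm (R1 *v (matpow A \<omega> *v x))"
proof -
  let ?a = "cmod (lam k)" and ?b = "cmod (lam (Suc k))"
  have a: "0 < ?a"
    using gt1 by linarith
  then have "1 / ?a + \<epsilon>3 = (1 + \<epsilon>3 * ?a) / ?a"
    by (simp add: field_simps)
  then have "growth_rate \<epsilon>2 \<epsilon>3 = 1 / ((1 / ?a + \<epsilon>3) * (?b + \<epsilon>2))"
    by (simp add: growth_rate_def)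
  moreover have "R1 *v (matpow A \<omega> *v x) = matpow N1 \<omega> *v (R1 *v x)"
    and "R2 *v (matpow A \<omega> *v x) = matpow N2 \<omega> *v (R2 *v x)"
    by (simp_all add: matrix_vector_mul_assoc matpow_intertwine_left[OF R1_A]
        matpow_intertwine_left[OF R2_A])
  moreover have "1 / ((1 + 1/\<gamma>) * zeta \<epsilon>3 (matrix_inv N1) * zeta \<epsilon>2 N2 * snorm R2)
      * (1 / ((1 / ?a + \<epsilon>3) * (?b + \<epsilon>2))) ^ \<omega> * norm (matpow N2 \<omega> *v (R2 *v x))
      < norm (matpow N1 \<omega> *v (R1 *v x))"
    using assms a zeta_bounds_inverse_N1[of \<epsilon>3] zeta_bounds_N2[of \<epsilon>2]
    by (intro block_ratio_lower_bound[OF matrix_inv_mult(2)[OF invertible_N1]]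
        one_le_snorm_left_inverse[OF R22 Q2_orth]) (auto intro: add_pos_pos add_nonneg_pos)
  ultimately show ?thesis
    by (simp add: gain_def)
qed

end

theorem mainTheorem10:
  fixes A :: "real^'n^'n"
    and Q1 :: "real^'k^'n" and Q2 :: "real^'s^'n"
    and R1 :: "real^'n^'k" and R2 :: "real^'n^'s"
    and N1 :: "real^'k^'k" and N2 :: "real^'s^'s"
    and lam :: "nat \<Rightarrow> complex" and v :: "nat \<Rightarrow> complex^'n"
    and \<gamma> \<epsilon>2 \<epsilon>3 :: real and x :: "real^'n"
  defines "n \<equiv> CARD('n)" and "k \<equiv> CARD('k)"
  assumes dims: "CARD('k) + CARD('s) = CARD('n)"
    \<comment> \<open>A diagonalizable (over C) with eigenpairs (lam i, v i), i = 1..n\<close>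
    and eig: "\<And>i. i \<in> {1..n} \<Longrightarrow> cmat A *v v i = lam i *s v i"
    and inj: "inj_on v {1..n}"
    and indep: "vec.independent (v ` {1..n})"
    and spans: "vec.span (v ` {1..n}) = UNIV"
    \<comment> \<open>ordering of the moduli of the eigenvalues\<close>
    and ord1: "2 \<le> k \<Longrightarrow> cmod (lam 1) > cmod (lam 2)"
    and ord_u: "\<And>i. 1 \<le> i \<Longrightarrow> i < k \<Longrightarrow> cmod (lam i) \<ge> cmod (lam (Suc i))"
    and gt1: "cmod (lam k) > 1"
    and lt1: "1 > cmod (lam (Suc k))"
    and ord_s: "\<And>i. Suc k \<le> i \<Longrightarrow> i < n \<Longrightarrow> cmod (lam i) \<ge> cmod (lam (Suc i))"
    \<comment> \<open>Q1, Q2 orthonormal columns spanning the unstable / stable subspaces\<close>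
    and Q1_orth: "transpose Q1 ** Q1 = mat 1"
    and Q2_orth: "transpose Q2 ** Q2 = mat 1"
    and Q1_span: "range (\<lambda>y. Q1 *v y) = {z. cvec z \<in> vec.span (v ` {1..k})}"
    and Q2_span: "range (\<lambda>y. Q2 *v y) = {z. cvec z \<in> vec.span (v ` {Suc k..n})}"
    \<comment> \<open>Q^{-1} = [R1; R2]\<close>
    and R11: "R1 ** Q1 = mat 1" and R12: "R1 ** Q2 = 0"
    and R21: "R2 ** Q1 = 0" and R22: "R2 ** Q2 = mat 1"
    and QR: "Q1 ** R1 + Q2 ** R2 = mat 1"
    \<comment> \<open>Q^{-1} A Q = diag(N1, N2)\<close>
    and N1_def: "R1 ** A ** Q1 = N1" and N2_def: "R2 ** A ** Q2 = N2"
    and off12: "R1 ** A ** Q2 = 0" and off21: "R2 ** A ** Q1 = 0"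
    and \<gamma>_pos: "\<gamma> > 0" and \<epsilon>2_pos: "\<epsilon>2 > 0" and \<epsilon>3_pos: "\<epsilon>3 > 0"
    and hx: "norm (R1 *v x) > \<gamma> * norm (R2 *v x)"
  shows
    "(\<forall>\<omega>::nat.
        norm (R1 *v (matpow A \<omega> *v x)) >
          (1 / ((1 + 1/\<gamma>) * zeta \<epsilon>3 (matrix_inv N1) * zeta \<epsilon>2 N2 * snorm R2)
           * (cmod (lam k) / ((1 + \<epsilon>3 * cmod (lam k)) * (cmod (lam (Suc k)) + \<epsilon>2))) ^ \<omega>)
          * norm (R2 *v (matpow A \<omega> *v x)))
     \<and> (cmod (lam k) / ((1 + \<epsilon>3 * cmod (lam k)) * (cmod (lam (Suc k)) + \<epsilon>2)) > 1 \<longrightarrow>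
        (\<exists>\<omega>0 :: real \<Rightarrow> nat.
           (\<lambda>g. real (\<omega>0 g)) \<in> O(\<lambda>g. ln (g / \<gamma>)) \<and>
           (\<forall>\<gamma>p>0. \<forall>\<omega>. \<omega> > \<omega>0 \<gamma>p \<longrightarrow>
              norm (R1 *v (matpow A \<omega> *v x)) > \<gamma>p * norm (R2 *v (matpow A \<omega> *v x)))))"
proof -
  interpret spectral_splitting A Q1 Q2 R1 R2 N1 N2 lam v n k
    using assms unfolding n_def k_def by unfold_locales simp_all
  have ratio: "\<And>\<omega>. gain \<gamma> \<epsilon>2 \<epsilon>3 * growth_rate \<epsilon>2 \<epsilon>3 ^ \<omega> * norm (R2 *v (matpow A \<omega> *v x))
      < norm (R1 *v (matpow A \<omega> *v x))"
    using \<gamma>_pos \<epsilon>2_pos \<epsilon>3_pos hx by (rule ratio_lower_bound)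
  moreover have "1 < growth_rate \<epsilon>2 \<epsilon>3 \<Longrightarrow> \<exists>\<omega>0 :: real \<Rightarrow> nat.
      (\<lambda>g. real (\<omega>0 g)) \<in> O(\<lambda>g. ln (g / \<gamma>)) \<and>
      (\<forall>\<gamma>p>0. \<forall>\<omega>. \<omega> > \<omega>0 \<gamma>p \<longrightarrow>
        norm (R1 *v (matpow A \<omega> *v x)) > \<gamma>p * norm (R2 *v (matpow A \<omega> *v x)))"
    using exceeds_power_growth_eventually[OF gain_pos[OF \<gamma>_pos \<epsilon>2_pos \<epsilon>3_pos] _ \<gamma>_pos ratio norm_ge_zero]
    by blast
  ultimately show ?thesis
    unfolding gain_def growth_rate_def by blast
qed

end
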